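(* Let $\mathbf{s}$ be a binary sequence that is not ultimately periodic, and let $p_{\mathbf{s}}(N)$ denote the number of distinct factors of length $N$ of $\mathbf{s}$. Then for all integers $k\ge1$ and $N\ge1$, $C_{2k}(\mathbf{s},\,2k\,p_{\mathbf{s}}(N))\ge N$.
   Context: Correlation measure: for $\mathbf{s}$ over $\{0,1\}$, an integer $r\ge1$, $D=(d_1,\dots,d_r)\in\mathbb{N}^r$ with $0\le d_1<\cdots<d_r$ and $M\in\mathbb{N}$, put $V(\mathbf{s},M,D)=\sum_{n=0}^{M-1}(-1)^{\mathbf{s}(n+d_1)+\cdots+\mathbf{s}(n+d_r)}$, and $C_r(\mathbf{s},N)=\max_{M,D}|V(\mathbf{s},M,D)|$ over all such $D$ and integers $M$ with $M+d_r\le N$. A factor of length $N$ of $\mathbf{s}$ is a word $\mathbf{s}(i)\mathbf{s}(i+1)\cdots\mathbf{s}(i+N-1)$ for some $i\ge0$. *)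

theory Defs
  imports Main
begin

definition binary_seq :: "(nat \<Rightarrow> nat) \<Rightarrow> bool" where
  "binary_seq s \<longleftrightarrow> (\<forall>n. s n \<in> {0, 1})"

definition ultimately_periodic :: "(nat \<Rightarrow> nat) \<Rightarrow> bool" where
  "ultimately_periodic s \<longleftrightarrow> (\<exists>p>0. \<exists>n0. \<forall>n\<ge>n0. s (n + p) = s n)"

definition factor :: "(nat \<Rightarrow> nat) \<Rightarrow> nat \<Rightarrow> nat \<Rightarrow> nat list" where
  "factor s i N = map (\<lambda>j. s (i + j)) [0..<N]"

definition complexity :: "(nat \<Rightarrow> nat) \<Rightarrow> nat \<Rightarrow> nat" where
  "complexity s N = card {factor s i N | i. True}"

definition corrV :: "(nat \<Rightarrow> nat) \<Rightarrow> nat \<Rightarrow> nat list \<Rightarrow> int" where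
  "corrV s M D = (\<Sum>n<M. (-1::int) ^ (\<Sum>d\<leftarrow>D. s (n + d)))"

definition corrC :: "nat \<Rightarrow> (nat \<Rightarrow> nat) \<Rightarrow> nat \<Rightarrow> int" where
  "corrC r s N = Max {\<bar>corrV s M D\<bar> | M D.
      length D = r \<and> sorted_wrt (<) D \<and> M + last D \<le> N}"

end

theory Submission imports Defs begin

text \<open>If s is not ultimately periodic, the Morse--Hedlund argument gives p = p_s(N) \<ge> N + 1.
  Among the p + 1 positions of each window [m(p+1), m(p+1) + p] two carry the same factor of
  length N, say i_m < j_m. Taking D = (i_0, j_0, ..., i_(k-1), j_(k-1)), for every n < N the
  letters s(n + i_m) and s(n + j_m) agree, so the exponent in V(s, N, D) is even and
  V(s, N, D) = N. Since d_2k \<le> kp + k - 1, the constraint N + d_2k \<le> 2kp holds.\<close>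

lemma factor_eq_iff: "factor s i n = factor s j n \<longleftrightarrow> (\<forall>x<n. s (i + x) = s (j + x))"
  unfolding factor_def by (auto simp: list_eq_iff_nth_eq)

lemma take_factor: "take n (factor s i (Suc n)) = factor s i n"
  unfolding factor_def by (simp add: take_map)

lemma complexity_eq_card_range: "complexity s n = card (range (\<lambda>i. factor s i n))"
  unfolding complexity_def by (simp add: full_SetCompr_eq)

lemma finite_range_if_binary_seq: "binary_seq s \<Longrightarrow> finite (range s)"
  unfolding binary_seq_def by (metis finite.emptyI finite.insertI finite_subset image_subset_iff)

lemma finite_factors:
  assumes "finite (range s)"
  shows "finite (range (\<lambda>i. factor s i n))"
proof (rule finite_subset)
  show "range (\<lambda>i. factor s i n) \<subseteq> {xs. set xs \<subseteq> range s \<and> length xs = n}"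
    unfolding factor_def by auto
  show "finite {xs. set xs \<subseteq> range s \<and> length xs = n}"
    using assms by (rule finite_lists_length_eq)
qed

lemma equal_factors_in_window:
  assumes "finite (range s)"
  shows "\<exists>i j. a \<le> i \<and> i < j \<and> j \<le> a + complexity s n \<and> factor s i n = factor s j n"
proof (rule ccontr)
  assume distinct: "\<not> ?thesis"
  have "inj_on (\<lambda>i. factor s i n) {a..a + complexity s n}"
    by (rule inj_onI) (use distinct in \<open>metis atLeastAtMost_iff linorder_neqE_nat\<close>)
  then have "card {a..a + complexity s n} \<le> card (range (\<lambda>i. factor s i n))"
    using finite_factors[OF assms] by (intro card_inj_on_le) auto
  then show False by (simp add: complexity_eq_card_range)
qed

lemma next_letter_determined:
  assumes "finite (range s)" and "complexity s (Suc n) \<le> complexity s n"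
    and "factor s i n = factor s j n"
  shows "s (i + n) = s (j + n)"
proof -
  let ?A = "range (\<lambda>i. factor s i (Suc n))"
  have image: "take n ` ?A = range (\<lambda>i. factor s i n)"
    by (auto simp: take_factor image_iff)
  have "card ?A \<le> card (take n ` ?A)"
    using assms(2) image by (simp add: complexity_eq_card_range)
  then have "card (take n ` ?A) = card ?A"
    using card_image_le[OF finite_factors[OF assms(1)]] le_antisym by blast
  then have "inj_on (take n) ?A"
    using eq_card_imp_inj_on[OF finite_factors[OF assms(1)]] by blast
  moreover have "take n (factor s i (Suc n)) = take n (factor s j (Suc n))"
    using assms(3) by (simp add: take_factor)
  ultimately have "factor s i (Suc n) = factor s j (Suc n)"
    by (auto dest: inj_onD)
  then show ?thesis by (simp add: factor_eq_iff)
qed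

lemma ultimately_periodic_if_next_letter_determined:
  assumes determined: "\<And>i j. factor s i n = factor s j n \<Longrightarrow> s (i + n) = s (j + n)"
    and "i < j" and "factor s i n = factor s j n"
  shows "ultimately_periodic s"
proof -
  have shifted: "factor s (i + t) n = factor s (j + t) n" for t
  proof (induction t)
    case 0
    then show ?case using assms(3) by simp
  next
    case (Suc t)
    then have "\<forall>x<Suc n. s (i + t + x) = s (j + t + x)"
      using determined[OF Suc] unfolding factor_eq_iff by (metis less_antisym)
    then show ?case
      unfolding factor_eq_iff by (metis Suc_less_eq add_Suc add_Suc_right)
  qed
  have "s (m + (j - i)) = s m" if "i + n \<le> m" for m
  proof -
    define t where "t = m - (i + n)"
    have "m = i + t + n" and "m + (j - i) = j + t + n"
      using that \<open>i < j\<close> unfolding t_def by simp_all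
    then show ?thesis using determined[OF shifted[of t]] by (simp only:)
  qed
  then show ?thesis
    unfolding ultimately_periodic_def using \<open>i < j\<close> by (intro exI[of _ "j - i"]) auto
qed

lemma complexity_less_Suc:
  assumes "finite (range s)" and "\<not> ultimately_periodic s"
  shows "complexity s n < complexity s (Suc n)"
proof (rule ccontr)
  assume "\<not> ?thesis"
  then have "complexity s (Suc n) \<le> complexity s n" by simp
  then have determined: "\<And>i j. factor s i n = factor s j n \<Longrightarrow> s (i + n) = s (j + n)"
    by (rule next_letter_determined[OF assms(1)])
  obtain i j where "i < j" and "factor s i n = factor s j n"
    using equal_factors_in_window[OF assms(1), of 0 n] by auto
  with determined have "ultimately_periodic s"
    by (rule ultimately_periodic_if_next_letter_determined)
  then show False using assms(2) by contradiction
qed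

lemma complexity_ge_Suc:
  assumes "finite (range s)" and "\<not> ultimately_periodic s"
  shows "Suc n \<le> complexity s n"
proof (induction n)
  case 0
  have "range (\<lambda>i. factor s i 0) = {[]}" by (auto simp: factor_def)
  then show ?case by (simp add: complexity_eq_card_range)
next
  case (Suc n)
  then show ?case using complexity_less_Suc[OF assms, of n] by simp
qed

text \<open>Positions f(2m) < f(2m+1) are picked in the m-th window of length p + 1, which makes f
  strictly increasing.\<close>

lemma paired_positions:
  assumes "finite (range s)"
  obtains f where "strict_mono f"
    and "\<And>m. factor s (f (2 * m)) n = factor s (f (2 * m + 1)) n"
    and "\<And>m. f (2 * m + 1) \<le> m * (complexity s n + 1) + complexity s n"
proof -
  let ?p = "complexity s n"
  have "\<forall>m. \<exists>i j. m * (?p + 1) \<le> i \<and> i < j \<and> j \<le> m * (?p + 1) + ?p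
      \<and> factor s i n = factor s j n"
    using equal_factors_in_window[OF assms] by blast
  then obtain I J where IJ: "\<And>m. m * (?p + 1) \<le> I m \<and> I m < J m \<and> J m \<le> m * (?p + 1) + ?p
      \<and> factor s (I m) n = factor s (J m) n"
    by metis
  define f where "f q = (if even q then I (q div 2) else J (q div 2))" for q
  have "f q < f (Suc q)" for q
  proof (cases "even q")
    case True
    then show ?thesis using IJ[of "q div 2"] by (simp add: f_def)
  next
    case False
    then obtain m where q: "q = 2 * m + 1" by (metis oddE)
    have "J m \<le> m * (?p + 1) + ?p" using IJ[of m] by simp
    also have "\<dots> < Suc m * (?p + 1)" by simp
    also have "\<dots> \<le> I (Suc m)" using IJ[of "Suc m"] by simp
    finally show ?thesis using q by (simp add: f_def)
  qed
  then have "strict_mono f" by (simp add: strict_mono_Suc_iff)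
  moreover have "f (2 * m) = I m" and "f (2 * m + 1) = J m" for m
    by (simp_all add: f_def)
  ultimately show thesis using IJ by (intro that[of f]) simp_all
qed

lemma even_sum_of_pairs:
  fixes g :: "nat \<Rightarrow> nat"
  assumes "\<And>m. g (2 * m) = g (2 * m + 1)"
  shows "even (\<Sum>q<2 * k. g q)"
proof (induction k)
  case 0
  then show ?case by simp
next
  case (Suc k)
  have "(\<Sum>q<2 * Suc k. g q) = (\<Sum>q<2 * k. g q) + (g (2 * k) + g (2 * k + 1))"
    by (simp add: add.assoc)
  then show ?case using Suc assms[of k] by simp
qed

lemma corrV_eq_if_even:
  assumes "\<And>n. n < M \<Longrightarrow> even (\<Sum>d\<leftarrow>D. s (n + d))"
  shows "corrV s M D = int M"
proof -
  have "corrV s M D = (\<Sum>n<M. 1)"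
    unfolding corrV_def using assms by (intro sum.cong) auto
  then show ?thesis by simp
qed

lemma corrV_paired_shifts:
  assumes "\<And>m. factor s (f (2 * m)) N = factor s (f (2 * m + 1)) N"
  shows "corrV s N (map f [0..<2 * k]) = int N"
proof (rule corrV_eq_if_even)
  fix n assume "n < N"
  have "even (\<Sum>q<2 * k. s (n + f q))"
  proof (rule even_sum_of_pairs)
    fix m show "s (n + f (2 * m)) = s (n + f (2 * m + 1))"
      using assms[of m] \<open>n < N\<close> unfolding factor_eq_iff by (simp add: add.commute)
  qed
  then show "even (\<Sum>d\<leftarrow>map f [0..<2 * k]. s (n + d))"
    by (simp add: interv_sum_list_conv_sum_set_nat atLeast0LessThan comp_def)
qed

lemma window_bound_arith:
  fixes N p k x :: nat
  assumes "Suc N \<le> p" and "x \<le> k * (p + 1) + p"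
  shows "N + x \<le> 2 * Suc k * p"
proof -
  have "k \<le> k * p" using assms(1) by simp
  moreover have "2 * Suc k * p = 2 * p + 2 * (k * p)" by simp
  moreover have "x \<le> k * p + k + p" using assms(2) by (simp add: algebra_simps)
  ultimately show ?thesis using assms(1) by linarith
qed

lemma le_last_if_sorted: "sorted_wrt (<) (D :: nat list) \<Longrightarrow> x \<in> set D \<Longrightarrow> x \<le> last D"
  by (induction D) (auto simp: last_in_set, fastforce dest: last_in_set)

lemma abs_corrV_le_corrC:
  assumes "length D = r" and "r > 0" and "sorted_wrt (<) D" and "M + last D \<le> L"
  shows "\<bar>corrV s M D\<bar> \<le> corrC r s L"
proof -
  let ?S = "{\<bar>corrV s M D\<bar> | M D. length D = r \<and> sorted_wrt (<) D \<and> M + last D \<le> L}"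
  have "?S \<subseteq> (\<lambda>(M, D). \<bar>corrV s M D\<bar>) ` ({..L} \<times> {D. set D \<subseteq> {..L} \<and> length D = r})"
  proof
    fix y assume "y \<in> ?S"
    then obtain M D where y: "y = \<bar>corrV s M D\<bar>" "length D = r" "sorted_wrt (<) D"
        "M + last D \<le> L"
      by blast
    then have "set D \<subseteq> {..L}" using le_last_if_sorted by fastforce
    then show "y \<in> (\<lambda>(M, D). \<bar>corrV s M D\<bar>) ` ({..L} \<times> {D. set D \<subseteq> {..L} \<and> length D = r})"
      using y by force
  qed
  moreover have "finite ({..L} \<times> {D. set D \<subseteq> {..L} \<and> length D = r})"
    by (intro finite_cartesian_product finite_lists_length_eq) auto
  ultimately have "finite ?S" by (meson finite_imageI finite_subset)
  then show ?thesis
    unfolding corrC_def using assms by (intro Max_ge) auto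
qed

theorem mainTheorem6:
  fixes s :: "nat \<Rightarrow> nat" and k N :: nat
  assumes "binary_seq s"
    and "\<not> ultimately_periodic s"
    and "k \<ge> 1" and "N \<ge> 1"
  shows "corrC (2 * k) s (2 * k * complexity s N) \<ge> int N"
proof -
  let ?p = "complexity s N"
  have fin: "finite (range s)" using assms(1) by (rule finite_range_if_binary_seq)
  obtain f where mono: "strict_mono f"
    and pairs: "\<And>m. factor s (f (2 * m)) N = factor s (f (2 * m + 1)) N"
    and bound: "\<And>m. f (2 * m + 1) \<le> m * (?p + 1) + ?p"
    using paired_positions[OF fin] by blast
  define D where "D = map f [0..<2 * k]"
  have sorted: "sorted_wrt (<) D"
    unfolding D_def sorted_wrt_map using mono
    by (auto intro: sorted_wrt_mono_rel[OF _ sorted_wrt_upt] simp: strict_mono_def)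
  obtain k' where k': "k = Suc k'" using assms(3) by (cases k) auto
  have "last D = f (2 * k' + 1)" unfolding D_def k' by (simp add: last_map)
  then have within: "N + last D \<le> 2 * k * ?p"
    unfolding k' using window_bound_arith[OF complexity_ge_Suc[OF fin assms(2)] bound[of k']] by simp
  have "int N = \<bar>corrV s N D\<bar>" unfolding D_def using corrV_paired_shifts[OF pairs] by simp
  also have "\<dots> \<le> corrC (2 * k) s (2 * k * ?p)"
    using assms(3) by (intro abs_corrV_le_corrC sorted within) (simp_all add: D_def)
  finally show ?thesis .
qed

end
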